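(* Let $k$ be a field, $n\ge0$, and suppose $|k|\ge n+1$. Let $W=\operatorname{span}_k\{(\alpha_1x_1+\cdots+\alpha_mx_m)^n\mid \alpha_1,\ldots,\alpha_m\in k\}\subseteq k\langle x_1,\ldots,x_m\rangle$. Then $W=P_n(x_1,\ldots,x_m)$.
   Context: $k\langle x_1,\ldots,x_m\rangle$ is the free associative unital $k$-algebra. For nonnegative integers $i_1,\ldots,i_m$, $p_{i_1,\ldots,i_m}(x_1,\ldots,x_m)$ is the sum of all distinct noncommutative monomials with exactly $i_j$ occurrences of $x_j$ for each $j$ ($p_{0,\ldots,0}=1$), and $P_n(x_1,\ldots,x_m)=\operatorname{span}_k\{p_{i_1,\ldots,i_m}(x_1,\ldots,x_m)\mid i_1+\cdots+i_m=n\}$. *)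

theory Defs
  imports Main
begin

text \<open>Elements of the free associative unital algebra k<x_0,...,x_{m-1}> are represented
  by their coefficient functions on words (lists of variable indices).\<close>

type_synonym 'k ncpoly = "nat list \<Rightarrow> 'k"

definition nc_one :: "'k::field ncpoly" where
  "nc_one = (\<lambda>w. if w = [] then 1 else 0)"

definition nc_mult :: "'k::field ncpoly \<Rightarrow> 'k ncpoly \<Rightarrow> 'k ncpoly" where
  "nc_mult f g = (\<lambda>w. \<Sum>i\<le>length w. f (take i w) * g (drop i w))"

primrec nc_pow :: "'k::field ncpoly \<Rightarrow> nat \<Rightarrow> 'k ncpoly" where
  "nc_pow f 0 = nc_one"
| "nc_pow f (Suc n) = nc_mult f (nc_pow f n)"

definition nc_linear :: "nat \<Rightarrow> (nat \<Rightarrow> 'k::field) \<Rightarrow> 'k ncpoly" where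
  "nc_linear m \<alpha> = (\<lambda>w. if length w = 1 \<and> hd w < m then \<alpha> (hd w) else 0)"

definition nc_p :: "nat \<Rightarrow> (nat \<Rightarrow> nat) \<Rightarrow> 'k::field ncpoly" where
  "nc_p m e = (\<lambda>w. if set w \<subseteq> {..<m} \<and> (\<forall>j<m. count_list w j = e j) then 1 else 0)"

definition nc_span :: "'k::field ncpoly set \<Rightarrow> 'k ncpoly set" where
  "nc_span S = {f. \<exists>F c. finite F \<and> F \<subseteq> S \<and> f = (\<lambda>w. \<Sum>g\<in>F. c g * g w)}"

definition nc_P :: "nat \<Rightarrow> nat \<Rightarrow> 'k::field ncpoly set" where
  "nc_P m n = nc_span {nc_p m e | e. (\<Sum>j<m. e j) = n}"

end

theory Submission
  imports Defs "HOL-Computational_Algebra.Polynomial" "HOL-Library.FuncSet"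
begin

text \<open>
  Expanding \<open>(\<alpha>_1 x_1 + \<dots> + \<alpha>_m x_m)^n\<close>, the coefficient of a word \<open>w\<close> is the
  monomial \<open>\<alpha>^e\<close>, where \<open>e_j\<close> counts the occurrences of \<open>x_j\<close> in \<open>w\<close>; so the power is
  \<open>\<Sum>_e \<alpha>^e p_e\<close> and lies in \<open>P_n\<close>.
  Conversely, for distinct \<open>t_0, \<dots>, t_n\<close> in \<open>k\<close> Lagrange interpolation inverts the
  Vandermonde system: there are \<open>c_{d,i}\<close> with \<open>\<Sum>_i c_{d,i} t_i^q = \<delta>_{q,d}\<close> for \<open>q \<le> n\<close>.
  Summing \<open>(\<Prod>_j c_{e_j,\<sigma>_j}) (t_{\<sigma>_1} x_1 + \<dots> + t_{\<sigma>_m} x_m)^n\<close> over all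
  \<open>\<sigma> : {1..m} \<rightarrow> {0..n}\<close>, the coefficient of \<open>w\<close> factors as
  \<open>\<Prod>_j \<Sum>_i c_{e_j,i} t_i^{count_j w} = \<Prod>_j \<delta>_{count_j w, e_j}\<close>, its coefficient in \<open>p_e\<close>.
\<close>

lemma nc_span_base: "g \<in> S \<Longrightarrow> g \<in> nc_span S"
  unfolding nc_span_def by (rule CollectI, rule exI[of _ "{g}"], rule exI[of _ "\<lambda>_. 1"]) auto

lemma nc_span_add_scaled:
  assumes "f \<in> nc_span S" "f' \<in> nc_span S"
  shows "(\<lambda>w. f w + x * f' w) \<in> nc_span S"
proof -
  obtain F a where F: "finite F" "F \<subseteq> S" and f: "f = (\<lambda>w. \<Sum>g\<in>F. a g * g w)"
    using assms(1) unfolding nc_span_def by blast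
  obtain F' b where F': "finite F'" "F' \<subseteq> S" and f': "f' = (\<lambda>w. \<Sum>g\<in>F'. b g * g w)"
    using assms(2) unfolding nc_span_def by blast
  define a' where "a' g = (if g \<in> F then a g else 0)" for g
  define b' where "b' g = (if g \<in> F' then b g else 0)" for g
  have "f w + x * f' w = (\<Sum>g\<in>F \<union> F'. (a' g + x * b' g) * g w)" for w
  proof -
    have "f w = (\<Sum>g\<in>F \<union> F'. a' g * g w)"
      unfolding f a'_def using F F' by (intro sum.mono_neutral_cong_left) auto
    moreover have "f' w = (\<Sum>g\<in>F \<union> F'. b' g * g w)"
      unfolding f' b'_def using F F' by (intro sum.mono_neutral_cong_left) auto
    ultimately show ?thesis
      by (simp add: distrib_right sum.distrib sum_distrib_left mult.assoc)
  qed
  then have "(\<lambda>w. f w + x * f' w) = (\<lambda>w. \<Sum>g\<in>F \<union> F'. (a' g + x * b' g) * g w)"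
    by (rule ext)
  then show ?thesis
    unfolding nc_span_def using F F'
    by (intro CollectI exI[of _ "F \<union> F'"] exI[of _ "\<lambda>g. a' g + x * b' g"]) auto
qed

lemma nc_span_sum:
  assumes "finite I" "\<And>i. i \<in> I \<Longrightarrow> g i \<in> nc_span S"
  shows "(\<lambda>w. \<Sum>i\<in>I. c i * g i w) \<in> nc_span S"
  using assms
proof (induction I rule: finite_induct)
  case empty
  have "(\<lambda>w. 0) \<in> nc_span S"
    unfolding nc_span_def by (rule CollectI, rule exI[of _ "{}"]) auto
  then show ?case by simp
next
  case (insert i I)
  have "(\<lambda>w. (\<Sum>i\<in>I. c i * g i w) + c i * g i w) \<in> nc_span S"
    using insert by (intro nc_span_add_scaled) auto
  then show ?case
    using insert by (simp add: add.commute)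
qed

lemma nc_span_subsetI:
  assumes "A \<subseteq> nc_span B"
  shows "nc_span A \<subseteq> nc_span B"
proof
  fix f assume "f \<in> nc_span A"
  then obtain F c where F: "finite F" "F \<subseteq> A" and f: "f = (\<lambda>w. \<Sum>g\<in>F. c g * g w)"
    unfolding nc_span_def by blast
  show "f \<in> nc_span B"
    unfolding f using F assms by (intro nc_span_sum[where g = "\<lambda>g. g"]) auto
qed

lemma nc_pow_nc_linear:
  "nc_pow (nc_linear m \<alpha>) n =
     (\<lambda>w. if length w = n \<and> set w \<subseteq> {..<m} then prod_list (map \<alpha> w) else 0)"
proof (induction n)
  case 0
  then show ?case by (auto simp: nc_one_def)
next
  case (Suc n)
  let ?l = "nc_linear m \<alpha>"
  show ?case
  proof
    fix w :: "nat list"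
    show "nc_pow ?l (Suc n) w =
        (if length w = Suc n \<and> set w \<subseteq> {..<m} then prod_list (map \<alpha> w) else 0)"
    proof (cases w)
      case Nil
      then show ?thesis by (simp add: nc_mult_def nc_linear_def)
    next
      case (Cons a v)
      have "nc_pow ?l (Suc n) w = (\<Sum>i\<le>length w. ?l (take i w) * nc_pow ?l n (drop i w))"
        by (simp add: nc_mult_def)
      also have "\<dots> = (\<Sum>i\<in>{1}. ?l (take i w) * nc_pow ?l n (drop i w))"
      proof (rule sum.mono_neutral_right)
        show "\<forall>i\<in>{..length w} - {1}. ?l (take i w) * nc_pow ?l n (drop i w) = 0"
          using Cons by (auto simp: nc_linear_def min_def)
      qed (use Cons in auto)
      also have "\<dots> = (if a < m then \<alpha> a else 0) * nc_pow ?l n v"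
        using Cons by (simp add: nc_linear_def)
      finally show ?thesis
        using Cons Suc.IH by auto
    qed
  qed
qed

lemma prod_list_map_eq_prod_power_count:
  fixes f :: "'a \<Rightarrow> 'b::comm_monoid_mult"
  assumes "set xs \<subseteq> X" "finite X"
  shows "prod_list (map f xs) = (\<Prod>x\<in>X. f x ^ count_list xs x)"
  using assms(1)
proof (induction xs)
  case Nil
  then show ?case by simp
next
  case (Cons a xs)
  have "(\<Prod>x\<in>X. f x ^ count_list (a # xs) x) =
      (\<Prod>x\<in>X. (if x = a then f a else 1) * f x ^ count_list xs x)"
    by (intro prod.cong) auto
  also have "\<dots> = f a * (\<Prod>x\<in>X. f x ^ count_list xs x)"
    using Cons.prems assms(2) by (simp add: prod.distrib prod.delta)
  finally show ?case
    using Cons by simp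
qed

definition exponent_vectors :: "nat \<Rightarrow> nat \<Rightarrow> (nat \<Rightarrow> nat) set" where
  "exponent_vectors m n = {e \<in> {..<m} \<rightarrow>\<^sub>E {..n}. (\<Sum>j<m. e j) = n}"

lemma finite_exponent_vectors: "finite (exponent_vectors m n)"
proof -
  have "finite ({..<m} \<rightarrow>\<^sub>E {..n})"
    by (intro finite_PiE) auto
  then show ?thesis
    unfolding exponent_vectors_def by simp
qed

lemma nc_p_eq_0_if_not_word:
  assumes "(\<Sum>j<m. e j) = n" "\<not> (length w = n \<and> set w \<subseteq> {..<m})"
  shows "nc_p m e w = 0"
proof -
  have "\<not> (set w \<subseteq> {..<m} \<and> (\<forall>j<m. count_list w j = e j))"
  proof
    assume w: "set w \<subseteq> {..<m} \<and> (\<forall>j<m. count_list w j = e j)"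
    then have "(\<Sum>j<m. count_list w j) = (\<Sum>j<m. e j)"
      by (intro sum.cong) auto
    then show False
      using w assms sum_count_set[of w "{..<m}"] by simp
  qed
  then show ?thesis
    by (simp add: nc_p_def)
qed

lemma nc_p_at_word:
  assumes "e \<in> extensional {..<m}" "set w \<subseteq> {..<m}"
  shows "nc_p m e w = (if e = restrict (count_list w) {..<m} then 1 else 0)"
  using assms by (auto simp: nc_p_def extensional_def fun_eq_iff)

lemma restrict_count_list_in_exponent_vectors:
  assumes "length w = n" "set w \<subseteq> {..<m}"
  shows "restrict (count_list w) {..<m} \<in> exponent_vectors m n"
  using assms count_le_length[of w] sum_count_set[of w "{..<m}"]
  by (auto simp: exponent_vectors_def)

lemma nc_pow_nc_linear_expansion:
  "nc_pow (nc_linear m \<alpha>) n = (\<lambda>w. \<Sum>e\<in>exponent_vectors m n. (\<Prod>j<m. \<alpha> j ^ e j) * nc_p m e w)"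
proof
  fix w :: "nat list"
  show "nc_pow (nc_linear m \<alpha>) n w = (\<Sum>e\<in>exponent_vectors m n. (\<Prod>j<m. \<alpha> j ^ e j) * nc_p m e w)"
  proof (cases "length w = n \<and> set w \<subseteq> {..<m}")
    case True
    define e\<^sub>w where "e\<^sub>w = restrict (count_list w) {..<m}"
    have "(\<Sum>e\<in>exponent_vectors m n. (\<Prod>j<m. \<alpha> j ^ e j) * nc_p m e w) =
        (\<Sum>e\<in>exponent_vectors m n. if e = e\<^sub>w then \<Prod>j<m. \<alpha> j ^ e j else 0)"
      using True
      by (intro sum.cong) (auto simp: nc_p_at_word PiE_iff exponent_vectors_def e\<^sub>w_def)
    also have "\<dots> = (\<Prod>j<m. \<alpha> j ^ count_list w j)"
      using True restrict_count_list_in_exponent_vectors[of w n m]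
      by (simp add: finite_exponent_vectors e\<^sub>w_def)
    finally show ?thesis
      using True
      by (simp add: nc_pow_nc_linear prod_list_map_eq_prod_power_count[where X = "{..<m}"])
  next
    case False
    then show ?thesis
      by (auto simp: nc_pow_nc_linear exponent_vectors_def nc_p_eq_0_if_not_word intro!: sum.neutral)
  qed
qed

lemma nc_pow_nc_linear_in_nc_P: "nc_pow (nc_linear m \<alpha>) n \<in> nc_P m n"
  unfolding nc_P_def nc_pow_nc_linear_expansion
  by (intro nc_span_sum nc_span_base finite_exponent_vectors)
     (force simp: exponent_vectors_def)

definition lagrange_basis :: "(nat \<Rightarrow> 'a::field) \<Rightarrow> nat \<Rightarrow> nat \<Rightarrow> 'a poly" where
  "lagrange_basis t n i =
     smult (inverse (\<Prod>j\<in>{..n} - {i}. t i - t j)) (\<Prod>j\<in>{..n} - {i}. [:- t j, 1:])"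

lemma poly_lagrange_basis:
  assumes "inj_on t {..n}" "i \<le> n" "k \<le> n"
  shows "poly (lagrange_basis t n i) (t k) = (if i = k then 1 else 0)"
proof (cases "i = k")
  case True
  have "(\<Prod>j\<in>{..n} - {i}. t i - t j) \<noteq> 0"
    using assms by (auto simp: inj_on_def)
  then show ?thesis
    using True by (simp add: lagrange_basis_def poly_prod)
next
  case False
  have "(\<Prod>j\<in>{..n} - {i}. poly [:- t j, 1:] (t k)) = 0"
    using assms False by (intro prod_zero) (auto intro!: bexI[of _ k])
  then show ?thesis
    using False by (simp add: lagrange_basis_def poly_prod)
qed

lemma degree_lagrange_basis:
  assumes "i \<le> n"
  shows "degree (lagrange_basis t n i) \<le> n"
proof -
  have "degree (\<Prod>j\<in>{..n} - {i}. [:- t j, 1:]) \<le> (\<Sum>j\<in>{..n} - {i}. degree [:- t j, 1:])"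
    by (rule degree_prod_sum_le[unfolded o_def]) auto
  also have "\<dots> = n"
    using assms by simp
  finally show ?thesis
    by (simp add: lagrange_basis_def)
qed

lemma lagrange_interpolation_monom:
  assumes "inj_on t {..n}" "q \<le> n"
  shows "(\<Sum>i\<le>n. smult (t i ^ q) (lagrange_basis t n i)) = monom 1 q"
proof (rule poly_eqI_degree)
  fix x assume "x \<in> t ` {..n}"
  then obtain k where "k \<le> n" "x = t k" by auto
  then show "poly (\<Sum>i\<le>n. smult (t i ^ q) (lagrange_basis t n i)) x = poly (monom 1 q) x"
    using assms by (simp add: poly_sum poly_monom poly_lagrange_basis if_distrib cong: if_cong)
next
  have "degree (\<Sum>i\<le>n. smult (t i ^ q) (lagrange_basis t n i)) \<le> n"
    by (intro degree_sum_le order.trans[OF degree_smult_le] degree_lagrange_basis) auto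
  then show "degree (\<Sum>i\<le>n. smult (t i ^ q) (lagrange_basis t n i)) < card (t ` {..n})"
    using assms by (simp add: card_image)
  show "degree (monom (1::'a) q) < card (t ` {..n})"
    using assms by (simp add: card_image degree_monom_eq)
qed

lemma sum_coeff_lagrange_basis_mult_power:
  assumes "inj_on t {..n}" "q \<le> n"
  shows "(\<Sum>i\<le>n. coeff (lagrange_basis t n i) d * t i ^ q) = (if q = d then 1 else 0)"
  using arg_cong[OF lagrange_interpolation_monom[OF assms], of "\<lambda>p. coeff p d"]
  by (simp add: coeff_sum coeff_monom mult.commute)

lemma nc_p_in_span_powers:
  fixes t :: "nat \<Rightarrow> 'k::field" and c :: "nat \<Rightarrow> nat \<Rightarrow> 'k"
  assumes dual: "\<And>d q. q \<le> n \<Longrightarrow> (\<Sum>i\<le>n. c d i * t i ^ q) = (if q = d then 1 else 0)"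
    and e: "(\<Sum>j<m. e j) = n"
  shows "nc_p m e \<in> nc_span {nc_pow (nc_linear m \<alpha>) n | \<alpha> :: nat \<Rightarrow> 'k. True}"
proof -
  define g where "g \<sigma> = nc_pow (nc_linear m (t \<circ> \<sigma>)) n" for \<sigma> :: "nat \<Rightarrow> nat"
  have "nc_p m e w = (\<Sum>\<sigma>\<in>{..<m} \<rightarrow>\<^sub>E {..n}. (\<Prod>j<m. c (e j) (\<sigma> j)) * g \<sigma> w)" for w
  proof (cases "length w = n \<and> set w \<subseteq> {..<m}")
    case True
    have "(\<Sum>\<sigma>\<in>{..<m} \<rightarrow>\<^sub>E {..n}. (\<Prod>j<m. c (e j) (\<sigma> j)) * g \<sigma> w) =
        (\<Sum>\<sigma>\<in>{..<m} \<rightarrow>\<^sub>E {..n}. \<Prod>j<m. c (e j) (\<sigma> j) * t (\<sigma> j) ^ count_list w j)"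
      using True
      by (intro sum.cong)
         (simp_all add: g_def nc_pow_nc_linear prod.distrib
            prod_list_map_eq_prod_power_count[where X = "{..<m}"])
    also have "\<dots> = (\<Prod>j<m. \<Sum>i\<le>n. c (e j) i * t i ^ count_list w j)"
      by (rule prod_sum_PiE[symmetric]) auto
    also have "\<dots> = (\<Prod>j<m. if count_list w j = e j then 1 else 0)"
      using True count_le_length[of w] by (intro prod.cong) (simp_all add: dual)
    also have "\<dots> = nc_p m e w"
      using True by (auto simp: nc_p_def)
    finally show ?thesis by simp
  next
    case False
    then have "g \<sigma> w = 0" for \<sigma>
      by (auto simp: g_def nc_pow_nc_linear)
    then show ?thesis
      using nc_p_eq_0_if_not_word[OF e False] by simp
  qed
  then have "nc_p m e = (\<lambda>w. \<Sum>\<sigma>\<in>{..<m} \<rightarrow>\<^sub>E {..n}. (\<Prod>j<m. c (e j) (\<sigma> j)) * g \<sigma> w)"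
    by (rule ext)
  moreover have "(\<lambda>w. \<Sum>\<sigma>\<in>{..<m} \<rightarrow>\<^sub>E {..n}. (\<Prod>j<m. c (e j) (\<sigma> j)) * g \<sigma> w)
      \<in> nc_span {nc_pow (nc_linear m \<alpha>) n | \<alpha> :: nat \<Rightarrow> 'k. True}"
    by (intro nc_span_sum nc_span_base finite_PiE) (auto simp: g_def)
  ultimately show ?thesis
    by (simp only:)
qed

lemma obtain_inj_on_atMost:
  assumes "infinite (UNIV :: 'a set) \<or> n + 1 \<le> card (UNIV :: 'a set)"
  obtains t :: "nat \<Rightarrow> 'a" where "inj_on t {..n}"
proof -
  obtain B :: "'a set" where "finite B" "card B = n + 1"
    using assms infinite_arbitrarily_large obtain_subset_with_card_n by metis
  then obtain h where "bij_betw h {..<n + 1} B"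
    using ex_bij_betw_nat_finite lessThan_atLeast0 by metis
  then show thesis
    using that by (auto simp: bij_betw_def lessThan_Suc_atMost)
qed

theorem proposition2p4:
  fixes m n :: nat
  assumes "infinite (UNIV :: 'k::field set) \<or> n + 1 \<le> card (UNIV :: 'k set)"
  shows "nc_span {nc_pow (nc_linear m \<alpha>) n | \<alpha> :: nat \<Rightarrow> 'k. True} = (nc_P m n :: 'k ncpoly set)"
proof
  show "nc_span {nc_pow (nc_linear m \<alpha>) n | \<alpha> :: nat \<Rightarrow> 'k. True} \<subseteq> nc_P m n"
    unfolding nc_P_def
    by (intro nc_span_subsetI) (use nc_pow_nc_linear_in_nc_P[unfolded nc_P_def] in blast)
next
  obtain t :: "nat \<Rightarrow> 'k" where t: "inj_on t {..n}"
    using obtain_inj_on_atMost[OF assms] .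
  have "nc_p m e \<in> nc_span {nc_pow (nc_linear m \<alpha>) n | \<alpha> :: nat \<Rightarrow> 'k. True}"
    if "(\<Sum>j<m. e j) = n" for e
    using nc_p_in_span_powers[OF sum_coeff_lagrange_basis_mult_power[OF t] that] .
  then show "nc_P m n \<subseteq> nc_span {nc_pow (nc_linear m \<alpha>) n | \<alpha> :: nat \<Rightarrow> 'k. True}"
    unfolding nc_P_def by (intro nc_span_subsetI) blast
qed

end
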